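(* Consider the polyhedron $\mathcal{F}$ of all $(y,x)\geq0$ satisfying the production, inventory and capacity constraints described in the context, where $u^{\mathrm{REC}}>0$ and $u^{\mathrm{CP}}>0$. Let $(\tilde{y},\tilde{x})$ be an extreme point of $\mathcal{F}$. Then for all $j\in\mathcal{J},l\in\mathcal{L},z\in\mathcal{Z}$, writing $Y_{z,l,j}=\sum_{n\in\mathcal{N}^{\mathrm{REC}}_l}\tilde{y}^{\mathrm{REC}}_{z,l,j,n}$, $$\#\{n\in\mathcal{N}^{\mathrm{REC}}_l:\tilde{y}^{\mathrm{REC}}_{z,l,j,n}=u^{\mathrm{REC}}\}\geq\Big\lceil\tfrac{Y_{z,l,j}}{u^{\mathrm{REC}}}\Big\rceil-1,\qquad \#\{n\in\mathcal{N}^{\mathrm{REC}}_l:\tilde{y}^{\mathrm{REC}}_{z,l,j,n}=0\}\geq|\mathcal{N}^{\mathrm{REC}}_l|-\Big\lceil\tfrac{Y_{z,l,j}}{u^{\mathrm{REC}}}\Big\rceil,$$ and for all $k\in\mathcal{K}^{\mathrm{CP}},l\in\mathcal{L},z\in\mathcal{Z}$, writing $Y_{z,l,k}=\sum_{n\in\mathcal{N}^{\mathrm{CP}}_{l,k}}\tilde{y}^{\mathrm{CP}}_{z,l,k,n}$, $$\#\{n\in\mathcal{N}^{\mathrm{CP}}_{l,k}:\tilde{y}^{\mathrm{CP}}_{z,l,k,n}=u^{\mathrm{CP}}\}\geq\Big\lceil\tfrac{Y_{z,l,k}}{u^{\mathrm{CP}}}\Big\rceil-1,\qquad \#\{n\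in\mathcal{N}^{\mathrm{CP}}_{l,k}:\tilde{y}^{\mathrm{CP}}_{z,l,k,n}=0\}\geq|\mathcal{N}^{\mathrm{CP}}_{l,k}|-\Big\lceil\tfrac{Y_{z,l,k}}{u^{\mathrm{CP}}}\Big\rceil.$$
   Context: Index sets (all finite): chemistries $\mathcal{I}$; recycling processes $\mathcal{J}$; materials $\mathcal{K}$ with cathode powders $\mathcal{K}^{\mathrm{CP}}\subseteq\mathcal{K}$; zones $\mathcal{Z}$; periods $\mathcal{T}=\{1,\dots,T\}$; planning periods $\mathcal{L}=\{1,\dots,L\}$ with $\{\mathcal{T}_l\}$ a partition of $\mathcal{T}$; stages with $\sigma_t$ the stage of $t\in\mathcal{T}\cup\{0\}$; finite nonempty node sets $\Omega_\sigma$; ancestor maps $a_\omega(t)\in\Omega_{\sigma_t}$ with $a_\omega(t)=\omega$ if $\omega\in\Omega_{\sigma_t}$; positive integers $N^{\mathrm{REC}}_l,N^{\mathrm{CP}}_{l,k}$ with $\mathcal{N}^{\mathrm{REC}}_l=\{1,\dots,N^{\mathrm{REC}}_l\}$, $\mathcal{N}^{\mathrm{CP}}_{l,k}=\{1,\dots,N^{\mathrm{CP}}_{l,k}\}$. Data: coefficients $\Delta^{\mathrm{NB}}_{i,k},\Delta^{\mathrm{CP}}_{k',k},\Delta^{\mathrm{MC}}_{k',k},\Delta^{\mathrm{REC}}_{k,i,j}$, demands $d_{\omega,z,t,i}$, supplies $s_{\omega,z,t,i}$, capacities $u^{\mathrm{REC}},u^{\mathrm{CP}}$. Variables (nonnegative),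 for $t\in\mathcal{T},z\in\mathcal{Z},\omega\in\Omega_{\sigma_t}$ (inventories also at $t=0$): $x^{\mathrm{NM,NB}}_{\omega,z,t,k},x^{\mathrm{RM,INV}}_{\omega,z,t,k},x^{\mathrm{RM,S}}_{\omega,z,t,k},x^{\mathrm{INV}}_{\omega,z,t,k}$ ($k\in\mathcal{K}$); $x^{\mathrm{INV,NB}},x^{\mathrm{CP,INV}}$ ($k\in\mathcal{K}^{\mathrm{CP}}$); $x^{\mathrm{NM,CP}},x^{\mathrm{MC,CP}},x^{\mathrm{INV,MC}}$ ($k\notin\mathcal{K}^{\mathrm{CP}}$); $x^{\mathrm{RB}}_{\omega,z,t,i}$; $x^{\mathrm{RB,RM}}_{\omega,z,t,i,j}$; $x^{\mathrm{TR,RM}}_{\omega,z,z',t,k},x^{\mathrm{TR,RB}}_{\omega,z,z',t,i}$ ($z'\neq z$); $y^{\mathrm{REC}}_{z,l,j,n}$ ($n\in\mathcal{N}^{\mathrm{REC}}_l$), $y^{\mathrm{CP}}_{z,l,k,n}$ ($k\in\mathcal{K}^{\mathrm{CP}},n\in\mathcal{N}^{\mathrm{CP}}_{l,k}$). Production constraints, for all $t\in\mathcal{T},z,\omega\in\Omega_{\sigma_t}$: $\sum_i\Delta^{\mathrm{NB}}_{i,k}d_{\omega,z,t,i}=x^{\mathrm{NM,NB}}_{\omega,z,t,k}+x^{\mathrm{INV,NB}}_{\omega,z,t,k}$ ($k\in\mathcal{K}^{\mathrm{CP}}$); $\sum_i\Delta^{\mathrm{NB}}_{i,k}d_{\omega,z,t,i}=x^{\mathrm{NM,NB}}_{\omega,z,t,k}$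 ($k\notin\mathcal{K}^{\mathrm{CP}}$); $\sum_{k'\in\mathcal{K}^{\mathrm{CP}}}\Delta^{\mathrm{CP}}_{k',k}x^{\mathrm{CP,INV}}_{\omega,z,t,k'}=x^{\mathrm{NM,CP}}_{\omega,z,t,k}+x^{\mathrm{MC,CP}}_{\omega,z,t,k}$ ($k\notin\mathcal{K}^{\mathrm{CP}}$); $\sum_{k'\notin\mathcal{K}^{\mathrm{CP}}}\Delta^{\mathrm{MC}}_{k',k}x^{\mathrm{MC,CP}}_{\omega,z,t,k'}=x^{\mathrm{INV,MC}}_{\omega,z,t,k}$ ($k\notin\mathcal{K}^{\mathrm{CP}}$); $x^{\mathrm{RM,INV}}_{\omega,z,t,k}+x^{\mathrm{RM,S}}_{\omega,z,t,k}=\sum_{i,j}\Delta^{\mathrm{REC}}_{k,i,j}x^{\mathrm{RB,RM}}_{\omega,z,t,i,j}$. Inventory constraints: $x^{\mathrm{RB}}_{\omega,z,0,i}=0$, $x^{\mathrm{INV}}_{\omega,z,0,k}=0$ for $\omega\in\Omega_{\sigma_0}$; for $t\in\mathcal{T}$ and $\omega'=a_\omega(t-1)$: $x^{\mathrm{RB}}_{\omega,z,t,i}=x^{\mathrm{RB}}_{\omega',z,t-1,i}+\sum_{z'\neq z}(x^{\mathrm{TR,RB}}_{\omega,z',z,t,i}-x^{\mathrm{TR,RB}}_{\omega,z,z',t,i})+s_{\omega,z,t,i}-\sum_jx^{\mathrm{RB,RM}}_{\omega,z,t,i,j}$; for $k\notin\mathcal{K}^{\mathrm{CP}}$: $x^{\mathrm{INV}}_{\omega,z,t,k}=x^{\mathrm{INV}}_{\omega',z,t-1,k}+\sum_{z'\neq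 z}(x^{\mathrm{TR,RM}}_{\omega,z',z,t,k}-x^{\mathrm{TR,RM}}_{\omega,z,z',t,k})+x^{\mathrm{RM,INV}}_{\omega,z,t,k}-x^{\mathrm{INV,MC}}_{\omega,z,t,k}$; for $k\in\mathcal{K}^{\mathrm{CP}}$: the same right-hand side but with $-x^{\mathrm{INV,MC}}_{\omega,z,t,k}$ replaced by $+x^{\mathrm{CP,INV}}_{\omega,z,t,k}-x^{\mathrm{INV,NB}}_{\omega,z,t,k}$. Capacity constraints: $\sum_{n\in\mathcal{N}^{\mathrm{REC}}_l}y^{\mathrm{REC}}_{z,l,j,n}\geq\sum_ix^{\mathrm{RB,RM}}_{\omega,z,t,i,j}$ and $\sum_{n\in\mathcal{N}^{\mathrm{CP}}_{l,k}}y^{\mathrm{CP}}_{z,l,k,n}\geq x^{\mathrm{CP,INV}}_{\omega,z,t,k}$ for all $t\in\mathcal{T}_l,\omega\in\Omega_{\sigma_t}$; the total capacities $\sum_ny^{\mathrm{REC}}_{z,l,j,n}$ and $\sum_ny^{\mathrm{CP}}_{z,l,k,n}$ are nondecreasing from $l-1$ to $l$ for $l\geq2$; $y^{\mathrm{REC}}_{z,l,j,n}\leq u^{\mathrm{REC}}$ and $y^{\mathrm{CP}}_{z,l,k,n}\leq u^{\mathrm{CP}}$. *)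

theory Defs
  imports Complex_Main
begin

text \<open>Periods are 1..nT (with 0 for initial inventories), planning periods 1..nL,
  cathode-powder material set cpK is a subset of matK; recycle-capacity module
  indices are 1..nREC l, cathode-powder module indices are 1..nCP l k.\<close>

record ('i,'j,'k,'z,'w,'s) inst =
  chemI :: "'i set"
  procJ :: "'j set"
  matK  :: "'k set"
  cpK   :: "'k set"
  zones :: "'z set"
  nT    :: nat
  nL    :: nat
  Tpart :: "nat \<Rightarrow> nat set"
  stage :: "nat \<Rightarrow> 's"
  Omg   :: "'s \<Rightarrow> 'w set"
  anc   :: "'w \<Rightarrow> nat \<Rightarrow> 'w"
  nREC  :: "nat \<Rightarrow> nat"
  nCP   :: "nat \<Rightarrow> 'k \<Rightarrow> nat"
  dNB   :: "'i \<Rightarrow> 'k \<Rightarrow> real"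
  dCP   :: "'k \<Rightarrow> 'k \<Rightarrow> real"
  dMC   :: "'k \<Rightarrow> 'k \<Rightarrow> real"
  dREC  :: "'k \<Rightarrow> 'i \<Rightarrow> 'j \<Rightarrow> real"
  dem   :: "'w \<Rightarrow> 'z \<Rightarrow> nat \<Rightarrow> 'i \<Rightarrow> real"
  supl  :: "'w \<Rightarrow> 'z \<Rightarrow> nat \<Rightarrow> 'i \<Rightarrow> real"
  uREC  :: real
  uCP   :: real

definition wf_inst :: "('i,'j,'k,'z,'w,'s) inst \<Rightarrow> bool" where
  "wf_inst P \<longleftrightarrow>
     finite (chemI P) \<and> finite (procJ P) \<and> finite (matK P) \<and> finite (zones P) \<and>
     cpK P \<subseteq> matK P \<and>
     (\<forall>l\<in>{1..nL P}. Tpart P l \<noteq> {}) \<and>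
     (\<forall>l\<in>{1..nL P}. \<forall>l'\<in>{1..nL P}. l \<noteq> l' \<longrightarrow> Tpart P l \<inter> Tpart P l' = {}) \<and>
     (\<Union>l\<in>{1..nL P}. Tpart P l) = {1..nT P} \<and>
     (\<forall>t\<in>{0..nT P}. finite (Omg P (stage P t)) \<and> Omg P (stage P t) \<noteq> {}) \<and>
     (\<forall>t\<in>{0..nT P}. \<forall>t'\<in>{t..nT P}. \<forall>\<omega>\<in>Omg P (stage P t').
         anc P \<omega> t \<in> Omg P (stage P t)) \<and>
     (\<forall>t\<in>{0..nT P}. \<forall>\<omega>\<in>Omg P (stage P t). anc P \<omega> t = \<omega>) \<and>
     (\<forall>l\<in>{1..nL P}. nREC P l > 0) \<and>
     (\<forall>l\<in>{1..nL P}. \<forall>k\<in>cpK P. nCP P l k > 0)"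

datatype ('w,'z,'i,'j,'k) var =
    XNMNB 'w 'z nat 'k | XRMINV 'w 'z nat 'k | XRMS 'w 'z nat 'k | XINV 'w 'z nat 'k
  | XINVNB 'w 'z nat 'k | XCPINV 'w 'z nat 'k
  | XNMCP 'w 'z nat 'k | XMCCP 'w 'z nat 'k | XINVMC 'w 'z nat 'k
  | XRB 'w 'z nat 'i | XRBRM 'w 'z nat 'i 'j
  | XTRRM 'w 'z 'z nat 'k | XTRRB 'w 'z 'z nat 'i
  | YREC 'z nat 'j nat | YCP 'z nat 'k nat

fun in_dom :: "('i,'j,'k,'z,'w,'s) inst \<Rightarrow> ('w,'z,'i,'j,'k) var \<Rightarrow> bool" where
  "in_dom P (XNMNB \<omega> z t k) = (t \<in> {1..nT P} \<and> z \<in> zones P \<and> \<omega> \<in> Omg P (stage P t) \<and> k \<in> matK P)"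
| "in_dom P (XRMINV \<omega> z t k) = (t \<in> {1..nT P} \<and> z \<in> zones P \<and> \<omega> \<in> Omg P (stage P t) \<and> k \<in> matK P)"
| "in_dom P (XRMS \<omega> z t k) = (t \<in> {1..nT P} \<and> z \<in> zones P \<and> \<omega> \<in> Omg P (stage P t) \<and> k \<in> matK P)"
| "in_dom P (XINV \<omega> z t k) = (t \<in> {0..nT P} \<and> z \<in> zones P \<and> \<omega> \<in> Omg P (stage P t) \<and> k \<in> matK P)"
| "in_dom P (XINVNB \<omega> z t k) = (t \<in> {1..nT P} \<and> z \<in> zones P \<and> \<omega> \<in> Omg P (stage P t) \<and> k \<in> cpK P)"
| "in_dom P (XCPINV \<omega> z t k) = (t \<in> {1..nT P} \<and> z \<in> zones P \<and> \<omega> \<in> Omg P (stage P t) \<and> k \<in> cpK P)"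
| "in_dom P (XNMCP \<omega> z t k) = (t \<in> {1..nT P} \<and> z \<in> zones P \<and> \<omega> \<in> Omg P (stage P t) \<and> k \<in> matK P - cpK P)"
| "in_dom P (XMCCP \<omega> z t k) = (t \<in> {1..nT P} \<and> z \<in> zones P \<and> \<omega> \<in> Omg P (stage P t) \<and> k \<in> matK P - cpK P)"
| "in_dom P (XINVMC \<omega> z t k) = (t \<in> {1..nT P} \<and> z \<in> zones P \<and> \<omega> \<in> Omg P (stage P t) \<and> k \<in> matK P - cpK P)"
| "in_dom P (XRB \<omega> z t i) = (t \<in> {0..nT P} \<and> z \<in> zones P \<and> \<omega> \<in> Omg P (stage P t) \<and> i \<in> chemI P)"
| "in_dom P (XRBRM \<omega> z t i j) = (t \<in> {1..nT P} \<and> z \<in> zones P \<and> \<omega> \<in> Omg P (stage P t) \<and> i \<in> chemI P \<and> j \<in> procJ P)"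
| "in_dom P (XTRRM \<omega> z z' t k) = (t \<in> {1..nT P} \<and> z \<in> zones P \<and> z' \<in> zones P \<and> z' \<noteq> z \<and> \<omega> \<in> Omg P (stage P t) \<and> k \<in> matK P)"
| "in_dom P (XTRRB \<omega> z z' t i) = (t \<in> {1..nT P} \<and> z \<in> zones P \<and> z' \<in> zones P \<and> z' \<noteq> z \<and> \<omega> \<in> Omg P (stage P t) \<and> i \<in> chemI P)"
| "in_dom P (YREC z l j n) = (z \<in> zones P \<and> l \<in> {1..nL P} \<and> j \<in> procJ P \<and> n \<in> {1..nREC P l})"
| "in_dom P (YCP z l k n) = (z \<in> zones P \<and> l \<in> {1..nL P} \<and> k \<in> cpK P \<and> n \<in> {1..nCP P l k})"

definition capREC :: "('i,'j,'k,'z,'w,'s) inst \<Rightarrow> (('w,'z,'i,'j,'k) var \<Rightarrow> real) \<Rightarrow> 'z \<Rightarrow> nat \<Rightarrow> 'j \<Rightarrow> real" where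
  "capREC P p z l j = (\<Sum>n\<in>{1..nREC P l}. p (YREC z l j n))"

definition capCP :: "('i,'j,'k,'z,'w,'s) inst \<Rightarrow> (('w,'z,'i,'j,'k) var \<Rightarrow> real) \<Rightarrow> 'z \<Rightarrow> nat \<Rightarrow> 'k \<Rightarrow> real" where
  "capCP P p z l k = (\<Sum>n\<in>{1..nCP P l k}. p (YCP z l k n))"

definition production_constraints :: "('i,'j,'k,'z,'w,'s) inst \<Rightarrow> (('w,'z,'i,'j,'k) var \<Rightarrow> real) \<Rightarrow> bool" where
  "production_constraints P p \<longleftrightarrow>
    (\<forall>t\<in>{1..nT P}. \<forall>z\<in>zones P. \<forall>\<omega>\<in>Omg P (stage P t).
      (\<forall>k\<in>cpK P. (\<Sum>i\<in>chemI P. dNB P i k * dem P \<omega> z t i)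
                   = p (XNMNB \<omega> z t k) + p (XINVNB \<omega> z t k)) \<and>
      (\<forall>k\<in>matK P - cpK P. (\<Sum>i\<in>chemI P. dNB P i k * dem P \<omega> z t i) = p (XNMNB \<omega> z t k)) \<and>
      (\<forall>k\<in>matK P - cpK P. (\<Sum>k'\<in>cpK P. dCP P k' k * p (XCPINV \<omega> z t k'))
                   = p (XNMCP \<omega> z t k) + p (XMCCP \<omega> z t k)) \<and>
      (\<forall>k\<in>matK P - cpK P. (\<Sum>k'\<in>matK P - cpK P. dMC P k' k * p (XMCCP \<omega> z t k'))
                   = p (XINVMC \<omega> z t k)) \<and>
      (\<forall>k\<in>matK P. p (XRMINV \<omega> z t k) + p (XRMS \<omega> z t k)
                   = (\<Sum>i\<in>chemI P. \<Sum>j\<in>procJ P. dREC P k i j * p (XRBRM \<omega> z t i j))))"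

definition inventory_constraints :: "('i,'j,'k,'z,'w,'s) inst \<Rightarrow> (('w,'z,'i,'j,'k) var \<Rightarrow> real) \<Rightarrow> bool" where
  "inventory_constraints P p \<longleftrightarrow>
    (\<forall>z\<in>zones P. \<forall>\<omega>\<in>Omg P (stage P 0).
       (\<forall>i\<in>chemI P. p (XRB \<omega> z 0 i) = 0) \<and> (\<forall>k\<in>matK P. p (XINV \<omega> z 0 k) = 0)) \<and>
    (\<forall>t\<in>{1..nT P}. \<forall>z\<in>zones P. \<forall>\<omega>\<in>Omg P (stage P t).
      (\<forall>i\<in>chemI P. p (XRB \<omega> z t i) =
          p (XRB (anc P \<omega> (t - 1)) z (t - 1) i)
          + (\<Sum>z'\<in>zones P - {z}. p (XTRRB \<omega> z' z t i) - p (XTRRB \<omega> z z' t i))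
          + supl P \<omega> z t i - (\<Sum>j\<in>procJ P. p (XRBRM \<omega> z t i j))) \<and>
      (\<forall>k\<in>matK P - cpK P. p (XINV \<omega> z t k) =
          p (XINV (anc P \<omega> (t - 1)) z (t - 1) k)
          + (\<Sum>z'\<in>zones P - {z}. p (XTRRM \<omega> z' z t k) - p (XTRRM \<omega> z z' t k))
          + p (XRMINV \<omega> z t k) - p (XINVMC \<omega> z t k)) \<and>
      (\<forall>k\<in>cpK P. p (XINV \<omega> z t k) =
          p (XINV (anc P \<omega> (t - 1)) z (t - 1) k)
          + (\<Sum>z'\<in>zones P - {z}. p (XTRRM \<omega> z' z t k) - p (XTRRM \<omega> z z' t k))
          + p (XRMINV \<omega> z t k) + p (XCPINV \<omega> z t k) - p (XINVNB \<omega> z t k)))"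

definition capacity_constraints :: "('i,'j,'k,'z,'w,'s) inst \<Rightarrow> (('w,'z,'i,'j,'k) var \<Rightarrow> real) \<Rightarrow> bool" where
  "capacity_constraints P p \<longleftrightarrow>
    (\<forall>z\<in>zones P. \<forall>l\<in>{1..nL P}. \<forall>t\<in>Tpart P l. \<forall>\<omega>\<in>Omg P (stage P t).
       (\<forall>j\<in>procJ P. capREC P p z l j \<ge> (\<Sum>i\<in>chemI P. p (XRBRM \<omega> z t i j))) \<and>
       (\<forall>k\<in>cpK P. capCP P p z l k \<ge> p (XCPINV \<omega> z t k))) \<and>
    (\<forall>z\<in>zones P. \<forall>l\<in>{2..nL P}.
       (\<forall>j\<in>procJ P. capREC P p z (l - 1) j \<le> capREC P p z l j) \<and>
       (\<forall>k\<in>cpK P. capCP P p z (l - 1) k \<le> capCP P p z l k)) \<and>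
    (\<forall>z\<in>zones P. \<forall>l\<in>{1..nL P}.
       (\<forall>j\<in>procJ P. \<forall>n\<in>{1..nREC P l}. p (YREC z l j n) \<le> uREC P) \<and>
       (\<forall>k\<in>cpK P. \<forall>n\<in>{1..nCP P l k}. p (YCP z l k n) \<le> uCP P))"

text \<open>The polyhedron F: points are functions on the variable type which vanish
  outside the index domain (so F lives in the finite-dimensional space of genuine variables).\<close>

definition feasible_set :: "('i,'j,'k,'z,'w,'s) inst \<Rightarrow> (('w,'z,'i,'j,'k) var \<Rightarrow> real) set" where
  "feasible_set P = {p. (\<forall>v. \<not> in_dom P v \<longrightarrow> p v = 0) \<and> (\<forall>v. p v \<ge> 0) \<and>
       production_constraints P p \<and> inventory_constraints P p \<and> capacity_constraints P p}"

definition extreme_point :: "('v \<Rightarrow> real) set \<Rightarrow> ('v \<Rightarrow> real) \<Rightarrow> bool" where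
  "extreme_point S p \<longleftrightarrow> p \<in> S \<and>
     (\<forall>p1\<in>S. \<forall>p2\<in>S. \<forall>\<theta>::real. 0 < \<theta> \<and> \<theta> < 1 \<and> p = (\<lambda>v. \<theta> * p1 v + (1 - \<theta>) * p2 v) \<longrightarrow> p1 = p2)"

end

theory Submission
  imports Defs
begin

text \<open>At an extreme point, two modules of the same capacity block cannot both be strictly
  between 0 and their bound: every constraint sees the modules of a block only through their
  sum and their individual bounds, so capacity could be moved from one module to the other
  in either direction, writing the point as the midpoint of two distinct feasible points.
  With at most one fractional module in a block, the block sum divided by the bound has a
  ceiling equal to the number of saturated modules plus at most one, which gives both counts.\<close>

lemma card_at_bounds_ge:
  fixes S :: "'a set" and y :: "'a \<Rightarrow> real" and u :: real
  assumes "finite S" and "u > 0"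
    and bounds: "\<forall>n\<in>S. 0 \<le> y n \<and> y n \<le> u"
    and one_fractional: "\<And>a b. a \<in> S \<Longrightarrow> b \<in> S \<Longrightarrow> y a \<in> {0<..<u} \<Longrightarrow> y b \<in> {0<..<u} \<Longrightarrow> a = b"
  shows "\<lceil>(\<Sum>n\<in>S. y n) / u\<rceil> - 1 \<le> int (card {n\<in>S. y n = u})"
    and "int (card S) - \<lceil>(\<Sum>n\<in>S. y n) / u\<rceil> \<le> int (card {n\<in>S. y n = 0})"
proof -
  define A where "A = {n\<in>S. y n = u}"
  define B where "B = {n\<in>S. y n = 0}"
  define F where "F = {n\<in>S. y n \<in> {0<..<u}}"
  have S_split: "S = A \<union> B \<union> F" and disj: "A \<inter> B = {}" "(A \<union> B) \<inter> F = {}"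
    using bounds \<open>u > 0\<close> unfolding A_def B_def F_def by force+
  have fin: "finite A" "finite B" "finite F"
    using \<open>finite S\<close> unfolding A_def B_def F_def by auto
  have card_S: "card S = card A + card B + card F"
    using S_split fin disj by (simp add: card_Un_disjoint)
  have "(\<Sum>n\<in>S. y n) = (\<Sum>n\<in>A. y n) + (\<Sum>n\<in>B. y n) + (\<Sum>n\<in>F. y n)"
    using S_split fin disj by (simp add: sum.union_disjoint)
  also have "\<dots> = real (card A) * u + (\<Sum>n\<in>F. y n)"
    unfolding A_def B_def by simp
  finally have sum_S: "(\<Sum>n\<in>S. y n) / u = real (card A) + (\<Sum>n\<in>F. y n) / u"
    using \<open>u > 0\<close> by (simp add: field_simps)
  have card_F: "card F \<le> 1"
    using one_fractional fin(3) unfolding F_def by (auto simp: card_le_Suc0_iff_eq)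
  have ceiling_eq: "\<lceil>(\<Sum>n\<in>S. y n) / u\<rceil> = int (card A) + int (card F)"
  proof (cases "F = {}")
    case False
    then obtain m where "m \<in> F" by blast
    then have "F = {m}" and "0 < y m / u" and "y m / u < 1"
      using one_fractional \<open>u > 0\<close> unfolding F_def by auto
    then show ?thesis
      unfolding sum_S by (simp add: ceiling_eq_iff)
  qed (simp add: sum_S)
  show "\<lceil>(\<Sum>n\<in>S. y n) / u\<rceil> - 1 \<le> int (card {n\<in>S. y n = u})"
    using ceiling_eq card_F unfolding A_def by simp
  show "int (card S) - \<lceil>(\<Sum>n\<in>S. y n) / u\<rceil> \<le> int (card {n\<in>S. y n = 0})"
    using ceiling_eq card_S unfolding B_def by simp
qed

lemma extreme_point_at_most_one_fractional:
  assumes "extreme_point S p"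
    and shift_closed: "\<And>d. a \<noteq> b \<Longrightarrow> 0 \<le> p a + d \<Longrightarrow> p a + d \<le> u \<Longrightarrow> 0 \<le> p b - d \<Longrightarrow> p b - d \<le> u \<Longrightarrow>
                         p(a := p a + d, b := p b - d) \<in> S"
    and "p a \<in> {0<..<u}" and "p b \<in> {0<..<u}"
  shows "a = b"
proof (rule ccontr)
  assume "a \<noteq> b"
  define e where "e = Min {p a, u - p a, p b, u - p b}"
  have "e > 0" and e_le: "e \<le> p a" "e \<le> u - p a" "e \<le> p b" "e \<le> u - p b"
    using assms(3,4) unfolding e_def by auto
  define q1 where "q1 = p(a := p a + e, b := p b - e)"
  define q2 where "q2 = p(a := p a - e, b := p b + e)"
  have "q1 \<in> S"
    unfolding q1_def using e_le \<open>e > 0\<close> \<open>a \<noteq> b\<close> by (intro shift_closed) auto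
  moreover have "q2 \<in> S"
    unfolding q2_def using shift_closed[of "- e"] e_le \<open>e > 0\<close> \<open>a \<noteq> b\<close> by simp
  moreover have "p = (\<lambda>v. 1/2 * q1 v + (1 - 1/2) * q2 v)"
    using \<open>a \<noteq> b\<close> unfolding q1_def q2_def by (auto simp: fun_eq_iff field_simps)
  moreover have "0 < (1/2::real) \<and> (1/2::real) < 1"
    by simp
  ultimately have "q1 = q2"
    using \<open>extreme_point S p\<close> unfolding extreme_point_def by blast
  then have "q1 a = q2 a" by simp
  then show False
    using \<open>e > 0\<close> \<open>a \<noteq> b\<close> unfolding q1_def q2_def by simp
qed

lemma sum_comp_transfer:
  fixes p :: "'b \<Rightarrow> 'c::ab_group_add"
  assumes "inj g" and "n1 \<in> N" and "n2 \<in> N" and "n1 \<noteq> n2" and "finite N"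
  shows "(\<Sum>n\<in>N. (p(g n1 := p (g n1) + d, g n2 := p (g n2) - d)) (g n)) = (\<Sum>n\<in>N. p (g n))"
proof -
  have "(p(g n1 := p (g n1) + d, g n2 := p (g n2) - d)) (g n)
        = p (g n) + (if n1 = n then d else 0) - (if n2 = n then d else 0)" for n
    using \<open>inj g\<close> \<open>n1 \<noteq> n2\<close> by (auto dest: injD)
  then show ?thesis
    using assms(2-5) by (simp add: sum_subtractf sum.distrib)
qed

lemma feasible_set_if_modules_changed:
  assumes "p \<in> feasible_set P"
    and changed: "\<And>v. q v \<noteq> p v \<Longrightarrow> (\<exists>z l j n. v = YREC z l j n) \<or> (\<exists>z l k n. v = YCP z l k n)"
    and "capREC P q = capREC P p" and "capCP P q = capCP P p"
    and "\<forall>v. \<not> in_dom P v \<longrightarrow> q v = 0" and "\<forall>v. q v \<ge> 0"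
    and "\<forall>z\<in>zones P. \<forall>l\<in>{1..nL P}. \<forall>j\<in>procJ P. \<forall>n\<in>{1..nREC P l}. q (YREC z l j n) \<le> uREC P"
    and "\<forall>z\<in>zones P. \<forall>l\<in>{1..nL P}. \<forall>k\<in>cpK P. \<forall>n\<in>{1..nCP P l k}. q (YCP z l k n) \<le> uCP P"
  shows "q \<in> feasible_set P"
proof -
  have same:
    "\<And>a b c d. q (XNMNB a b c d) = p (XNMNB a b c d)"
    "\<And>a b c d. q (XRMINV a b c d) = p (XRMINV a b c d)"
    "\<And>a b c d. q (XRMS a b c d) = p (XRMS a b c d)"
    "\<And>a b c d. q (XINV a b c d) = p (XINV a b c d)"
    "\<And>a b c d. q (XINVNB a b c d) = p (XINVNB a b c d)"
    "\<And>a b c d. q (XCPINV a b c d) = p (XCPINV a b c d)"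
    "\<And>a b c d. q (XNMCP a b c d) = p (XNMCP a b c d)"
    "\<And>a b c d. q (XMCCP a b c d) = p (XMCCP a b c d)"
    "\<And>a b c d. q (XINVMC a b c d) = p (XINVMC a b c d)"
    "\<And>a b c d. q (XRB a b c d) = p (XRB a b c d)"
    "\<And>a b c d f. q (XRBRM a b c d f) = p (XRBRM a b c d f)"
    "\<And>a b c d f. q (XTRRM a b c d f) = p (XTRRM a b c d f)"
    "\<And>a b c d f. q (XTRRB a b c d f) = p (XTRRB a b c d f)"
    using changed by blast+
  have "production_constraints P p" "inventory_constraints P p" "capacity_constraints P p"
    using \<open>p \<in> feasible_set P\<close> unfolding feasible_set_def by auto
  then have "production_constraints P q" "inventory_constraints P q" "capacity_constraints P q"
    using assms(7,8) unfolding production_constraints_def inventory_constraints_def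
      capacity_constraints_def same assms(3,4) by auto
  then show ?thesis
    using assms(5,6) unfolding feasible_set_def by blast
qed

lemma feasible_set_module_bounds:
  assumes "p \<in> feasible_set P"
  shows "\<forall>v. p v \<ge> 0"
    and "\<forall>z\<in>zones P. \<forall>l\<in>{1..nL P}. \<forall>j\<in>procJ P. \<forall>n\<in>{1..nREC P l}. p (YREC z l j n) \<le> uREC P"
    and "\<forall>z\<in>zones P. \<forall>l\<in>{1..nL P}. \<forall>k\<in>cpK P. \<forall>n\<in>{1..nCP P l k}. p (YCP z l k n) \<le> uCP P"
  using assms unfolding feasible_set_def capacity_constraints_def by auto

lemma feasible_set_transfer_YREC:
  assumes "p \<in> feasible_set P"
    and "z \<in> zones P" and "l \<in> {1..nL P}" and "j \<in> procJ P"
    and n: "n1 \<in> {1..nREC P l}" "n2 \<in> {1..nREC P l}" "n1 \<noteq> n2"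
    and "0 \<le> p (YREC z l j n1) + d" "p (YREC z l j n1) + d \<le> uREC P"
    and "0 \<le> p (YREC z l j n2) - d" "p (YREC z l j n2) - d \<le> uREC P"
  shows "p(YREC z l j n1 := p (YREC z l j n1) + d, YREC z l j n2 := p (YREC z l j n2) - d)
         \<in> feasible_set P" (is "?q \<in> _")
proof (rule feasible_set_if_modules_changed[OF assms(1)])
  show "capREC P ?q = capREC P p"
  proof (intro ext)
    fix z' l' j'
    show "capREC P ?q z' l' j' = capREC P p z' l' j'"
    proof (cases "(z', l', j') = (z, l, j)")
      case True
      then show ?thesis
        using sum_comp_transfer[of "YREC z l j" n1 "{1..nREC P l}" n2 p d] n by (simp add: capREC_def inj_def)
    qed (auto simp: capREC_def)
  qed
  show "capCP P ?q = capCP P p"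
    by (intro ext) (simp add: capCP_def)
  show "\<forall>v. \<not> in_dom P v \<longrightarrow> ?q v = 0"
    using assms(1-4) n unfolding feasible_set_def by auto
  show "\<forall>v. ?q v \<ge> 0"
    using feasible_set_module_bounds(1)[OF assms(1)] assms(8,10) by auto
  show "\<forall>z\<in>zones P. \<forall>l\<in>{1..nL P}. \<forall>j\<in>procJ P. \<forall>n\<in>{1..nREC P l}. ?q (YREC z l j n) \<le> uREC P"
    using feasible_set_module_bounds(2)[OF assms(1)] assms(9,11) by auto
  show "\<forall>z\<in>zones P. \<forall>l\<in>{1..nL P}. \<forall>k\<in>cpK P. \<forall>n\<in>{1..nCP P l k}. ?q (YCP z l k n) \<le> uCP P"
    using feasible_set_module_bounds(3)[OF assms(1)] by auto
qed auto

lemma feasible_set_transfer_YCP: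
  assumes "p \<in> feasible_set P"
    and "z \<in> zones P" and "l \<in> {1..nL P}" and "k \<in> cpK P"
    and n: "n1 \<in> {1..nCP P l k}" "n2 \<in> {1..nCP P l k}" "n1 \<noteq> n2"
    and "0 \<le> p (YCP z l k n1) + d" "p (YCP z l k n1) + d \<le> uCP P"
    and "0 \<le> p (YCP z l k n2) - d" "p (YCP z l k n2) - d \<le> uCP P"
  shows "p(YCP z l k n1 := p (YCP z l k n1) + d, YCP z l k n2 := p (YCP z l k n2) - d)
         \<in> feasible_set P" (is "?q \<in> _")
proof (rule feasible_set_if_modules_changed[OF assms(1)])
  show "capCP P ?q = capCP P p"
  proof (intro ext)
    fix z' l' k'
    show "capCP P ?q z' l' k' = capCP P p z' l' k'"
    proof (cases "(z', l', k') = (z, l, k)")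
      case True
      then show ?thesis
        using sum_comp_transfer[of "YCP z l k" n1 "{1..nCP P l k}" n2 p d] n by (simp add: capCP_def inj_def)
    qed (auto simp: capCP_def)
  qed
  show "capREC P ?q = capREC P p"
    by (intro ext) (simp add: capREC_def)
  show "\<forall>v. \<not> in_dom P v \<longrightarrow> ?q v = 0"
    using assms(1-4) n unfolding feasible_set_def by auto
  show "\<forall>v. ?q v \<ge> 0"
    using feasible_set_module_bounds(1)[OF assms(1)] assms(8,10) by auto
  show "\<forall>z\<in>zones P. \<forall>l\<in>{1..nL P}. \<forall>j\<in>procJ P. \<forall>n\<in>{1..nREC P l}. ?q (YREC z l j n) \<le> uREC P"
    using feasible_set_module_bounds(2)[OF assms(1)] by auto
  show "\<forall>z\<in>zones P. \<forall>l\<in>{1..nL P}. \<forall>k\<in>cpK P. \<forall>n\<in>{1..nCP P l k}. ?q (YCP z l k n) \<le> uCP P"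
    using feasible_set_module_bounds(3)[OF assms(1)] assms(9,11) by auto
qed auto

lemma extreme_point_block_counts:
  assumes "extreme_point S p" and "finite N" and "u > 0" and "inj g"
    and bounds: "\<forall>n\<in>N. 0 \<le> p (g n) \<and> p (g n) \<le> u"
    and transfer: "\<And>n1 n2 d. n1 \<in> N \<Longrightarrow> n2 \<in> N \<Longrightarrow> n1 \<noteq> n2 \<Longrightarrow>
      0 \<le> p (g n1) + d \<Longrightarrow> p (g n1) + d \<le> u \<Longrightarrow> 0 \<le> p (g n2) - d \<Longrightarrow> p (g n2) - d \<le> u \<Longrightarrow>
      p(g n1 := p (g n1) + d, g n2 := p (g n2) - d) \<in> S"
  shows "\<lceil>(\<Sum>n\<in>N. p (g n)) / u\<rceil> - 1 \<le> int (card {n\<in>N. p (g n) = u})"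
    and "int (card N) - \<lceil>(\<Sum>n\<in>N. p (g n)) / u\<rceil> \<le> int (card {n\<in>N. p (g n) = 0})"
proof -
  have one_fractional: "n1 = n2" if n: "n1 \<in> N" "n2 \<in> N"
    and fractional: "p (g n1) \<in> {0<..<u}" "p (g n2) \<in> {0<..<u}" for n1 n2
  proof -
    have "g n1 = g n2"
    proof (rule extreme_point_at_most_one_fractional[OF assms(1) _ fractional])
      fix d assume "g n1 \<noteq> g n2"
      then show "0 \<le> p (g n1) + d \<Longrightarrow> p (g n1) + d \<le> u \<Longrightarrow> 0 \<le> p (g n2) - d \<Longrightarrow> p (g n2) - d \<le> u \<Longrightarrow>
          p(g n1 := p (g n1) + d, g n2 := p (g n2) - d) \<in> S"
        using transfer[OF n] by blast
    qed
    with \<open>inj g\<close> show "n1 = n2" by (simp add: inj_eq)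
  qed
  show "\<lceil>(\<Sum>n\<in>N. p (g n)) / u\<rceil> - 1 \<le> int (card {n\<in>N. p (g n) = u})"
    and "int (card N) - \<lceil>(\<Sum>n\<in>N. p (g n)) / u\<rceil> \<le> int (card {n\<in>N. p (g n) = 0})"
    using card_at_bounds_ge[OF assms(2,3) bounds one_fractional] by blast+
qed

lemma extreme_point_YREC_counts:
  assumes "uREC P > 0" and "extreme_point (feasible_set P) p"
    and "z \<in> zones P" and "l \<in> {1..nL P}" and "j \<in> procJ P"
  shows "\<lceil>capREC P p z l j / uREC P\<rceil> - 1 \<le> int (card {n\<in>{1..nREC P l}. p (YREC z l j n) = uREC P})"
    and "int (nREC P l) - \<lceil>capREC P p z l j / uREC P\<rceil> \<le> int (card {n\<in>{1..nREC P l}. p (YREC z l j n) = 0})"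
proof -
  have feasible: "p \<in> feasible_set P"
    using assms(2) unfolding extreme_point_def by blast
  have bounds: "\<forall>n\<in>{1..nREC P l}. 0 \<le> p (YREC z l j n) \<and> p (YREC z l j n) \<le> uREC P"
    using feasible_set_module_bounds(1,2)[OF feasible] assms(3-5) by blast
  have inj: "inj (YREC z l j)"
    by (rule injI) simp
  note counts = extreme_point_block_counts[OF assms(2) finite_atLeastAtMost assms(1) inj bounds
      feasible_set_transfer_YREC[OF feasible assms(3-5)]]
  show "\<lceil>capREC P p z l j / uREC P\<rceil> - 1 \<le> int (card {n\<in>{1..nREC P l}. p (YREC z l j n) = uREC P})"
    and "int (nREC P l) - \<lceil>capREC P p z l j / uREC P\<rceil> \<le> int (card {n\<in>{1..nREC P l}. p (YREC z l j n) = 0})"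
    using counts by (simp_all add: capREC_def)
qed

lemma extreme_point_YCP_counts:
  assumes "uCP P > 0" and "extreme_point (feasible_set P) p"
    and "z \<in> zones P" and "l \<in> {1..nL P}" and "k \<in> cpK P"
  shows "\<lceil>capCP P p z l k / uCP P\<rceil> - 1 \<le> int (card {n\<in>{1..nCP P l k}. p (YCP z l k n) = uCP P})"
    and "int (nCP P l k) - \<lceil>capCP P p z l k / uCP P\<rceil> \<le> int (card {n\<in>{1..nCP P l k}. p (YCP z l k n) = 0})"
proof -
  have feasible: "p \<in> feasible_set P"
    using assms(2) unfolding extreme_point_def by blast
  have bounds: "\<forall>n\<in>{1..nCP P l k}. 0 \<le> p (YCP z l k n) \<and> p (YCP z l k n) \<le> uCP P"
    using feasible_set_module_bounds(1,3)[OF feasible] assms(3-5) by blast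
  have inj: "inj (YCP z l k)"
    by (rule injI) simp
  note counts = extreme_point_block_counts[OF assms(2) finite_atLeastAtMost assms(1) inj bounds
      feasible_set_transfer_YCP[OF feasible assms(3-5)]]
  show "\<lceil>capCP P p z l k / uCP P\<rceil> - 1 \<le> int (card {n\<in>{1..nCP P l k}. p (YCP z l k n) = uCP P})"
    and "int (nCP P l k) - \<lceil>capCP P p z l k / uCP P\<rceil> \<le> int (card {n\<in>{1..nCP P l k}. p (YCP z l k n) = 0})"
    using counts by (simp_all add: capCP_def)
qed

theorem theorem1:
  fixes P :: "('i,'j,'k,'z,'w,'s) inst"
    and p :: "('w,'z,'i,'j,'k) var \<Rightarrow> real"
  assumes "wf_inst P"
    and "uREC P > 0" and "uCP P > 0"
    and "extreme_point (feasible_set P) p"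
  shows "(\<forall>j\<in>procJ P. \<forall>l\<in>{1..nL P}. \<forall>z\<in>zones P.
            int (card {n\<in>{1..nREC P l}. p (YREC z l j n) = uREC P})
              \<ge> \<lceil>capREC P p z l j / uREC P\<rceil> - 1 \<and>
            int (card {n\<in>{1..nREC P l}. p (YREC z l j n) = 0})
              \<ge> int (nREC P l) - \<lceil>capREC P p z l j / uREC P\<rceil>) \<and>
         (\<forall>k\<in>cpK P. \<forall>l\<in>{1..nL P}. \<forall>z\<in>zones P.
            int (card {n\<in>{1..nCP P l k}. p (YCP z l k n) = uCP P})
              \<ge> \<lceil>capCP P p z l k / uCP P\<rceil> - 1 \<and>
            int (card {n\<in>{1..nCP P l k}. p (YCP z l k n) = 0})
              \<ge> int (nCP P l k) - \<lceil>capCP P p z l k / uCP P\<rceil>)"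
  using extreme_point_YREC_counts[OF assms(2,4)] extreme_point_YCP_counts[OF assms(3,4)]
  by simp

end
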